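(* Let $\mathbb{K}$ be a field of characteristic zero, let $t\in\mathbb{K}\setminus\{0,1\}$, and let $\mathfrak{g}$ be a finite-dimensional perfect Lie algebra over $\mathbb{K}$, i.e. $\mathfrak{g}^{(2)}=\mathfrak{g}$. Then $\mathcal{D}(t,1,0)(\mathfrak{g})=\{0\}$.
   Context: For a Lie algebra $\mathfrak{g}=(V,\mu)$, the derived algebra $\mathfrak{g}^{(2)}$ is the linear span of all products $\mu(X,Y)$. $\mathcal{D}(t,1,0)(\mathfrak{g})$ denotes the space of $(t,1,0)$-derivations of $\mathfrak{g}$: linear maps $D:V\to V$ with $tD\mu(X,Y)=\mu(DX,Y)$ for all $X,Y\in V$. *)

theory Defs
  imports Complex_Main
begin

definition lie_algebra :: "('k::field \<Rightarrow> 'v::ab_group_add \<Rightarrow> 'v) \<Rightarrow> ('v \<Rightarrow> 'v \<Rightarrow> 'v) \<Rightarrow> bool" where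
  "lie_algebra scale \<mu> \<longleftrightarrow>
     vector_space scale \<and>
     (\<forall>x. Vector_Spaces.linear scale scale (\<mu> x)) \<and>
     (\<forall>y. Vector_Spaces.linear scale scale (\<lambda>x. \<mu> x y)) \<and>
     (\<forall>x. \<mu> x x = 0) \<and>
     (\<forall>x y z. \<mu> x (\<mu> y z) + \<mu> y (\<mu> z x) + \<mu> z (\<mu> x y) = 0)"

definition finite_dim :: "('k::field \<Rightarrow> 'v::ab_group_add \<Rightarrow> 'v) \<Rightarrow> bool" where
  "finite_dim scale \<longleftrightarrow> (\<exists>B. finite B \<and> module.span scale B = UNIV)"

definition derived_algebra :: "('k::field \<Rightarrow> 'v::ab_group_add \<Rightarrow> 'v) \<Rightarrow> ('v \<Rightarrow> 'v \<Rightarrow> 'v) \<Rightarrow> 'v set" where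
  "derived_algebra scale \<mu> = module.span scale {\<mu> x y | x y. True}"

text \<open>(t,1,0)-derivations: linear D with t D(mu X Y) = mu (D X) Y.\<close>
definition gen_derivations :: "('k::field \<Rightarrow> 'v::ab_group_add \<Rightarrow> 'v) \<Rightarrow> ('v \<Rightarrow> 'v \<Rightarrow> 'v) \<Rightarrow> 'k \<Rightarrow> ('v \<Rightarrow> 'v) set" where
  "gen_derivations scale \<mu> t =
     {D. Vector_Spaces.linear scale scale D \<and> (\<forall>x y. scale t (D (\<mu> x y)) = \<mu> (D x) y)}"

end

theory Submission
  imports Defs
begin

text \<open>Antisymmetry turns the defining identity \<open>t D[x,y] = [Dx,y]\<close> into \<open>t D[x,y] = [x,Dy]\<close>,
  so \<open>D\<close> can be moved onto any entry of a double bracket \<open>[x,[y,z]]\<close> at the cost of a power of \<open>t\<close>.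
  Writing the Jacobi identity for \<open>Dx, y, z\<close> and comparing with \<open>D\<close> applied to the Jacobi identity
  for \<open>x, y, z\<close> gives \<open>(t - t\<^sup>2) D[x,[y,z]] = 0\<close>. Hence \<open>D\<close> kills \<open>[g,[g,g]]\<close>, which spans \<open>g\<close> when
  \<open>g\<close> is perfect.\<close>

locale lie_alg =
  fixes scale :: "'k::field \<Rightarrow> 'v::ab_group_add \<Rightarrow> 'v" (infixr \<open>*s\<close> 75)
    and bracket :: "'v \<Rightarrow> 'v \<Rightarrow> 'v"
  assumes lie_algebra: "lie_algebra scale bracket"
begin

sublocale vector_space scale
  using lie_algebra by (simp add: lie_algebra_def)

sublocale endo: vector_space_pair scale scale ..

lemma linear_bracket_right: "Vector_Spaces.linear scale scale (bracket x)"
  using lie_algebra by (simp add: lie_algebra_def)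

lemma bracket_add_right: "bracket x (y + z) = bracket x y + bracket x z"
  and bracket_scale_right: "bracket x (c *s y) = c *s bracket x y"
  using linear_bracket_right by (simp_all add: Vector_Spaces.linear_iff)

lemma bracket_add_left: "bracket (x + y) z = bracket x z + bracket y z"
  using lie_algebra by (simp add: lie_algebra_def Vector_Spaces.linear_iff)

lemma bracket_zero_left: "bracket 0 y = 0"
  using bracket_add_left[of 0 0 y] by simp

lemma bracket_self: "bracket x x = 0"
  and jacobi: "bracket x (bracket y z) + bracket y (bracket z x) + bracket z (bracket x y) = 0"
  using lie_algebra by (simp_all add: lie_algebra_def)

lemma bracket_antisym: "bracket x y = - bracket y x"
proof -
  have "0 = bracket (x + y) (x + y)"
    by (simp add: bracket_self)
  also have "\<dots> = bracket x y + bracket y x"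
    unfolding bracket_add_left bracket_add_right by (simp add: bracket_self)
  finally have "bracket x y + bracket y x = 0"
    by (rule sym)
  then show ?thesis
    by (simp add: eq_neg_iff_add_eq_0)
qed

lemma linear_eq_0_if_perfect:
  assumes "derived_algebra scale bracket = UNIV"
    and "Vector_Spaces.linear scale scale f"
    and "\<And>x y. f (bracket x y) = 0"
  shows "f w = 0"
proof -
  have spanning: "w \<in> span {bracket x y | x y. True}"
    using assms(1) by (simp add: derived_algebra_def)
  show ?thesis
    by (rule endo.linear_eq_0_on_span[OF assms(2) _ spanning])
      (use assms(3) in auto)
qed

lemma zero_in_gen_derivations: "(\<lambda>_. 0) \<in> gen_derivations scale bracket t"
  by (simp add: gen_derivations_def Vector_Spaces.linear_iff bracket_zero_left vector_space_axioms)

context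
  fixes D t
  assumes D: "D \<in> gen_derivations scale bracket t"
begin

lemma gen_derivation_linear: "Vector_Spaces.linear scale scale D"
  and gen_derivation_left: "t *s D (bracket x y) = bracket (D x) y"
  using D by (simp_all add: gen_derivations_def)

lemma gen_derivation_add: "D (x + y) = D x + D y"
  and gen_derivation_neg: "D (- x) = - D x"
  using gen_derivation_linear by (rule endo.linear_add, rule endo.linear_neg)

lemma gen_derivation_right: "t *s D (bracket x y) = bracket x (D y)"
  using gen_derivation_left[of y x] bracket_antisym[of x y] bracket_antisym[of "D y" x]
  by (simp add: gen_derivation_neg)

lemma gen_derivation_double_bracket_middle:
  "(t * t) *s D (bracket x (bracket y z)) = bracket x (bracket (D y) z)"
  by (metis gen_derivation_left gen_derivation_right bracket_scale_right scale_scale)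

lemma gen_derivation_double_bracket_inner:
  "(t * t) *s D (bracket x (bracket y z)) = bracket x (bracket y (D z))"
  by (metis gen_derivation_right bracket_scale_right scale_scale)

lemma gen_derivation_double_bracket_eq_0:
  assumes "t \<noteq> 0" and "t \<noteq> 1"
  shows "D (bracket x (bracket y z)) = 0"
proof -
  let ?a = "D (bracket x (bracket y z))"
    and ?b = "D (bracket y (bracket z x))"
    and ?c = "D (bracket z (bracket x y))"
  have "?a + ?b + ?c = 0"
    using arg_cong[OF jacobi[of x y z], of D] gen_derivation_add
    by (metis add.right_neutral add_left_cancel)
  then have bc: "?b + ?c = - ?a"
    by (metis add.assoc add.commute eq_neg_iff_add_eq_0)
  have "0 = bracket (D x) (bracket y z) + bracket y (bracket z (D x)) + bracket z (bracket (D x) y)"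
    by (rule jacobi[symmetric])
  also have "\<dots> = t *s ?a + (t * t) *s (?b + ?c)"
    using gen_derivation_left[of x "bracket y z"] gen_derivation_double_bracket_inner[of y z x]
      gen_derivation_double_bracket_middle[of z x y]
    by (simp add: scale_right_distrib add.assoc)
  also have "\<dots> = (t - t * t) *s ?a"
    by (simp add: bc scale_left_diff_distrib)
  finally have "(t - t * t) *s ?a = 0" ..
  moreover have "t - t * t \<noteq> 0"
    using assms by (simp add: right_diff_distrib'[symmetric])
  ultimately show ?thesis
    by simp
qed

lemma gen_derivation_eq_0_if_perfect:
  assumes "t \<noteq> 0" and "t \<noteq> 1"
    and perfect: "derived_algebra scale bracket = UNIV"
  shows "D = (\<lambda>_. 0)"
proof -
  have "D (bracket x w) = 0" for x w
    using linear_eq_0_if_perfect[OF perfect,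
        OF Vector_Spaces.linear_compose[OF linear_bracket_right gen_derivation_linear]]
      gen_derivation_double_bracket_eq_0[OF assms(1,2)]
    by simp
  then show ?thesis
    using linear_eq_0_if_perfect[OF perfect gen_derivation_linear] by auto
qed

end

end

theorem theorem3p3:
  fixes scale :: "'k::field_char_0 \<Rightarrow> 'v::ab_group_add \<Rightarrow> 'v"
    and \<mu> :: "'v \<Rightarrow> 'v \<Rightarrow> 'v" and t :: 'k
  assumes "lie_algebra scale \<mu>"
    and "finite_dim scale"
    and "t \<noteq> 0" and "t \<noteq> 1"
    and "derived_algebra scale \<mu> = UNIV"
  shows "gen_derivations scale \<mu> t = {\<lambda>_. 0}"
proof -
  interpret lie_alg scale \<mu>
    by (rule lie_alg.intro) fact
  show ?thesis
    using gen_derivation_eq_0_if_perfect[OF _ assms(3-5)] zero_in_gen_derivations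
    by blast
qed

end
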